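(* For every vertex $(r,t,s)$ of the Farey tree $\mathrm{F}\mathbb T$, one has $\Omega(t)=\Omega(r)^{-1}\,xyz\,\Omega(s)^{-1}$ in $\mathfrak F_3$.
   Context: $\mathfrak F_3$ is the free group on $\{x,y,z\}$. Farey tree $\mathrm{F}\mathbb T$: rooted planar binary tree with root $(\frac01,\frac11,\frac10)$, and each vertex $(\frac ab,\frac cd,\frac ef)$ has left child $(\frac ab,\frac{a+c}{b+d},\frac cd)$ and right child $(\frac cd,\frac{c+e}{d+f},\frac ef)$; $\frac10$ represents $\infty$. Every positive rational $t$ occurs as the middle entry of exactly one vertex. Word tree $\mathrm{W}\mathbb T$: rooted planar binary tree with vertices in $\mathfrak F_3^3$, root $(x,y,z)$, and a vertex $(a,b,c)$ has left child $(a,bcb^{-1},b)$ and right child $(b,b^{-1}ab,c)$. $\Omega(t)$ for positive rational $t$: the middle entry of the vertex of $\mathrm{W}\mathbb T$ at the same position (same sequence of left/right moves from the root) as the unique vertex of $\mathrm{F}\mathbb T$ with middle entry $t$; $\Omega(\frac01)=x$, $\Omega(\frac10)=z$. *)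

theory Defs
  imports Complex_Main
begin

datatype gen = GX | GY | GZ

text \<open>A letter is a generator together with an exponent sign (True = +1, False = -1).\<close>

type_synonym letter = "gen \<times> bool"
type_synonym word = "letter list"

definition inv_letter :: "letter \<Rightarrow> letter" where
  "inv_letter l = (fst l, \<not> snd l)"

definition cons_red :: "letter \<Rightarrow> word \<Rightarrow> word" where
  "cons_red l w = (case w of [] \<Rightarrow> [l] | m # w' \<Rightarrow> if m = inv_letter l then w' else l # w)"

definition reduce :: "word \<Rightarrow> word" where
  "reduce w = foldr cons_red w []"

definition reduced :: "word \<Rightarrow> bool" where
  "reduced w \<longleftrightarrow> (\<forall>i. Suc i < length w \<longrightarrow> w ! Suc i \<noteq> inv_letter (w ! i))"

definition F3 :: "word set" where
  "F3 = {w. reduced w}"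

definition fmult :: "word \<Rightarrow> word \<Rightarrow> word" (infixl "\<cdot>" 70) where
  "fmult u v = reduce (u @ v)"

definition finv :: "word \<Rightarrow> word" where
  "finv w = rev (map inv_letter w)"

definition gx :: word where "gx = [(GX, True)]"
definition gy :: word where "gy = [(GY, True)]"
definition gz :: word where "gz = [(GZ, True)]"

section \<open>Trees: a vertex is addressed by its path from the root (False = left, True = right)\<close>

type_synonym path = "bool list"

text \<open>Farey tree: fractions a/b are pairs (a,b) of naturals; (1,0) represents infinity.
  The path is read from the root, first move first.\<close>

fun farey_step :: "bool \<Rightarrow> (nat\<times>nat) \<times> (nat\<times>nat) \<times> (nat\<times>nat) \<Rightarrow> (nat\<times>nat) \<times> (nat\<times>nat) \<times> (nat\<times>nat)" where
  "farey_step False ((a,b),(c,d),(e,f)) = ((a,b),(a+c,b+d),(c,d))"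
| "farey_step True ((a,b),(c,d),(e,f)) = ((c,d),(c+e,d+f),(e,f))"

definition farey_vertex :: "path \<Rightarrow> (nat\<times>nat) \<times> (nat\<times>nat) \<times> (nat\<times>nat)" where
  "farey_vertex p = fold farey_step p ((0,1),(1,1),(1,0))"

fun word_step :: "bool \<Rightarrow> word \<times> word \<times> word \<Rightarrow> word \<times> word \<times> word" where
  "word_step False (a,b,c) = (a, b \<cdot> c \<cdot> finv b, b)"
| "word_step True (a,b,c) = (b, finv b \<cdot> a \<cdot> b, c)"

definition word_vertex :: "path \<Rightarrow> word \<times> word \<times> word" where
  "word_vertex p = fold word_step p (gx, gy, gz)"

definition frac_val :: "nat \<times> nat \<Rightarrow> rat" where
  "frac_val q = of_nat (fst q) / of_nat (snd q)"

text \<open>Omega on non-negative rationals: Omega 0 = x, and for t > 0 the middle entry of the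
  word-tree vertex at the (unique) position of the Farey vertex with middle entry t.\<close>
definition Omega :: "rat \<Rightarrow> word" where
  "Omega t = (if t = 0 then gx
              else fst (snd (word_vertex (THE p. frac_val (fst (snd (farey_vertex p))) = t))))"

text \<open>Omega on Farey entries, with (a,0) (i.e. 1/0) standing for infinity: Omega(1/0) = z.\<close>
definition Omega_frac :: "nat \<times> nat \<Rightarrow> word" where
  "Omega_frac q = (if snd q = 0 then gz else Omega (frac_val q))"

end

theory Submission
  imports Defs
begin

(* Both moves of the word tree replace a triple (A, B, C) by one with the same product in the
   free group, since A (B C B^-1) B = A B C and B (B^-1 A B) C = A B C; hence A B C = x y z at
   every vertex, i.e. B = A^-1 x y z C^-1.  It remains to see that the entries of a word-tree
   vertex are the Omega-values of the entries of the Farey vertex at the same position.  For the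
   middle entry this holds because distinct paths lead to distinct middle fractions: after a
   left (right) move, all later middle entries lie strictly between the mediant's neighbours,
   hence below (above) the current middle entry.  The outer entries of a Farey vertex are
   0/1, 1/0 or middle entries of ancestors, and the word tree copies its outer entries in the
   same way. *)

lemma inv_letter_inv_letter [simp]: "inv_letter (inv_letter l) = l"
  by (simp add: inv_letter_def)

lemma reduce_Nil [simp]: "reduce [] = []"
  by (simp add: reduce_def)

lemma reduce_Cons [simp]: "reduce (l # w) = cons_red l (reduce w)"
  by (simp add: reduce_def)

lemma reduce_append: "reduce (u @ v) = foldr cons_red u (reduce v)"
  by (simp add: reduce_def)

lemma cons_red_simps [simp]:
  "cons_red l [] = [l]"
  "cons_red l (m # w) = (if m = inv_letter l then w else l # m # w)"
  by (simp_all add: cons_red_def)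

lemma reduced_simps [simp]:
  "reduced []"
  "reduced [l]"
  "reduced (l # m # w) \<longleftrightarrow> m \<noteq> inv_letter l \<and> reduced (m # w)"
  by (auto simp: reduced_def nth_Cons split: nat.splits)

lemma reduced_Cons_tl: "reduced (l # w) \<Longrightarrow> reduced w"
  by (cases w) auto

lemma reduced_cons_red: "reduced w \<Longrightarrow> reduced (cons_red l w)"
  by (cases w; cases "tl w") (auto dest: reduced_Cons_tl)

lemma cons_red_inv_letter_cancel: "reduced w \<Longrightarrow> cons_red (inv_letter l) (cons_red l w) = w"
  by (cases w; cases "tl w") auto

lemma reduced_reduce: "reduced (reduce w)"
  by (induction w) (auto simp: reduced_cons_red)

lemma reduce_reduced: "reduced w \<Longrightarrow> reduce w = w"
proof (induction w)
  case (Cons l w)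
  then have "reduce w = w"
    using reduced_Cons_tl by blast
  with Cons.prems show ?case
    by (cases w) auto
qed simp

lemma reduced_foldr_cons_red: "reduced w \<Longrightarrow> reduced (foldr cons_red u w)"
  by (induction u) (auto simp: reduced_cons_red)

lemma foldr_cons_red_cons_red:
  assumes "reduced w"
  shows "foldr cons_red (cons_red l v) w = cons_red l (foldr cons_red v w)"
proof (cases v)
  case (Cons m v')
  have "reduced (foldr cons_red v' w)"
    using assms by (rule reduced_foldr_cons_red)
  then show ?thesis
    using Cons cons_red_inv_letter_cancel[of _ "inv_letter l"] by auto
qed simp

lemma foldr_cons_red_reduce: "reduced w \<Longrightarrow> foldr cons_red (reduce u) w = foldr cons_red u w"
  by (induction u) (simp_all add: foldr_cons_red_cons_red)

lemma reduce_append_reduce_left [simp]: "reduce (reduce u @ v) = reduce (u @ v)"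
  by (simp add: reduce_append foldr_cons_red_reduce reduced_reduce)

lemma reduce_append_reduce_right [simp]: "reduce (u @ reduce v) = reduce (u @ v)"
  by (simp add: reduce_append reduce_reduced reduced_reduce)

lemma reduce_reduce [simp]: "reduce (reduce u) = reduce u"
  by (simp add: reduce_reduced reduced_reduce)

lemma fmult_assoc: "u \<cdot> v \<cdot> w = u \<cdot> (v \<cdot> w)"
  unfolding fmult_def by (metis append_assoc reduce_append_reduce_left reduce_append_reduce_right)

lemma reduce_fmult [simp]: "reduce (u \<cdot> v) = u \<cdot> v"
  by (simp add: fmult_def)

lemma fmult_in_F3: "u \<cdot> v \<in> F3"
  by (simp add: F3_def fmult_def reduced_reduce)

lemma finv_finv [simp]: "finv (finv u) = u"
  by (simp add: finv_def rev_map comp_def)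

lemma reduce_finv_append_self [simp]: "reduce (finv u @ u) = []"
proof (induction u)
  case (Cons l u)
  have "reduce (finv (l # u) @ l # u) = reduce (finv u @ reduce (inv_letter l # l # u))"
    by (simp only: reduce_append_reduce_right) (simp add: finv_def)
  also have "reduce (inv_letter l # l # u) = reduce u"
    by (simp add: cons_red_inv_letter_cancel reduced_reduce)
  finally show ?case
    using Cons.IH by simp
qed (simp add: finv_def)

lemma reduce_append_finv_self [simp]: "reduce (u @ finv u) = []"
  using reduce_finv_append_self[of "finv u"] by simp

lemma fmult_finv_cancel_right: "w \<cdot> finv c \<cdot> c = reduce w"
proof -
  have "w \<cdot> finv c \<cdot> c = reduce (w @ reduce (finv c @ c))"
    by (simp only: fmult_def reduce_append_reduce_left reduce_append_reduce_right append_assoc)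
  also have "\<dots> = reduce w"
    by (simp only: reduce_finv_append_self append_Nil2)
  finally show ?thesis .
qed

lemma fmult_finv_cancel_left: "c \<cdot> (finv c \<cdot> w) = reduce w"
proof -
  have "c \<cdot> (finv c \<cdot> w) = reduce (reduce (c @ finv c) @ w)"
    by (simp only: fmult_def reduce_append_reduce_left reduce_append_reduce_right append_assoc)
  also have "\<dots> = reduce w"
    by (simp only: reduce_append_finv_self append_Nil)
  finally show ?thesis .
qed

lemma fmult_solve_middle:
  assumes "B \<in> F3"
  shows "finv A \<cdot> (A \<cdot> B \<cdot> C) \<cdot> finv C = B"
proof -
  have "finv A \<cdot> (A \<cdot> B \<cdot> C) = B \<cdot> C"
    using fmult_finv_cancel_left[of "finv A" "B \<cdot> C"] by (simp add: fmult_assoc)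
  moreover have "B \<cdot> C \<cdot> finv C = B"
    using fmult_finv_cancel_right[of B "finv C"] assms by (simp add: F3_def reduce_reduced)
  ultimately show ?thesis
    by simp
qed

fun triple_product :: "word \<times> word \<times> word \<Rightarrow> word" where
  "triple_product (A, B, C) = A \<cdot> B \<cdot> C"

lemma triple_product_word_step: "triple_product (word_step b V) = triple_product V"
proof (cases V)
  case (fields A B C)
  show ?thesis
  proof (cases b)
    case False
    have "A \<cdot> (B \<cdot> C \<cdot> finv B) \<cdot> B = A \<cdot> reduce (B \<cdot> C)"
      by (simp only: fmult_assoc [of A] fmult_finv_cancel_right)
    then show ?thesis
      using False fields by (simp add: fmult_assoc)
  next
    case True
    have "B \<cdot> (finv B \<cdot> A \<cdot> B) = reduce (A \<cdot> B)"
      by (simp only: fmult_assoc fmult_finv_cancel_left)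
    then show ?thesis
      using True fields by simp
  qed
qed

lemma triple_product_word_vertex: "triple_product (word_vertex p) = gx \<cdot> gy \<cdot> gz"
proof -
  have "triple_product (fold word_step p V) = triple_product V" for V
    by (induction p arbitrary: V) (simp_all add: triple_product_word_step)
  then show ?thesis
    by (simp add: word_vertex_def)
qed

lemma word_vertex_in_F3: "word_vertex p \<in> F3 \<times> F3 \<times> F3"
proof -
  have "fold word_step p V \<in> F3 \<times> F3 \<times> F3" if "V \<in> F3 \<times> F3 \<times> F3" for V
    using that
  proof (induction p arbitrary: V)
    case (Cons b p)
    then show ?case
      by (cases b; cases V) (auto simp: fmult_in_F3)
  qed simp
  then show ?thesis
    by (simp add: word_vertex_def F3_def gx_def gy_def gz_def)
qed

abbreviation mid :: "'a \<times> 'a \<times> 'a \<Rightarrow> 'a" where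
  "mid V \<equiv> fst (snd V)"

(* Cross-multiplied comparison of fractions; it treats (1, 0) as infinity and is transitive
   without any positivity assumption on denominators. *)
definition farey_less :: "nat \<times> nat \<Rightarrow> nat \<times> nat \<Rightarrow> bool" where
  "farey_less q q' \<longleftrightarrow> fst q * snd q' < fst q' * snd q"

fun mediant :: "nat \<times> nat \<Rightarrow> nat \<times> nat \<Rightarrow> nat \<times> nat" where
  "mediant (a, b) (c, d) = (a + c, b + d)"

fun farey_triple :: "(nat \<times> nat) \<times> (nat \<times> nat) \<times> (nat \<times> nat) \<Rightarrow> bool" where
  "farey_triple (r, t, s) \<longleftrightarrow> t = mediant r s \<and> farey_less r s"

lemma farey_less_mediant:
  "farey_less r s \<Longrightarrow> farey_less r (mediant r s) \<and> farey_less (mediant r s) s"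
  by (cases r; cases s) (simp add: farey_less_def algebra_simps)

lemma farey_less_trans:
  assumes "farey_less p q" "farey_less q r"
  shows "farey_less p r"
proof -
  obtain a b c d e f where pqr: "p = (a, b)" "q = (c, d)" "r = (e, f)"
    by (metis prod.exhaust)
  then have "a * d < c * b" "c * f < e * d"
    using assms by (simp_all add: farey_less_def)
  have "0 < b"
    using \<open>a * d < c * b\<close> by (cases "b = 0") auto
  have "a * f * d = (a * d) * f"
    by (simp add: algebra_simps)
  also have "\<dots> \<le> (c * b) * f"
    using \<open>a * d < c * b\<close> by simp
  also have "\<dots> = (c * f) * b"
    by (simp add: algebra_simps)
  also have "\<dots> < (e * d) * b"
    using \<open>c * f < e * d\<close> \<open>0 < b\<close> by simp
  also have "\<dots> = e * b * d"
    by (simp add: algebra_simps)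
  finally have "a * f * d < e * b * d" .
  then have "a * f < e * b"
    by simp
  then show ?thesis
    using pqr by (simp add: farey_less_def)
qed

lemma farey_triple_mid_pos: "farey_triple V \<Longrightarrow> 0 < fst (mid V) \<and> 0 < snd (mid V)"
  by (cases V rule: prod_cases3; cases "fst V"; cases "snd (snd V)") (auto simp: farey_less_def intro: gr0I)

lemma farey_triple_less: "farey_triple (r, t, s) \<Longrightarrow> farey_less r t \<and> farey_less t s"
  using farey_less_mediant by simp

lemma farey_step_eq:
  "farey_step b (r, t, s) = (if b then (t, mediant t s, s) else (r, mediant r t, t))"
  by (cases r; cases t; cases s; cases b) simp_all

lemma farey_triple_farey_step:
  assumes "farey_triple V"
  shows "farey_triple (farey_step b V)"
proof -
  obtain r t s where V: "V = (r, t, s)"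
    using prod_cases3 by blast
  then have "farey_less r t" "farey_less t s"
    using assms farey_triple_less by blast+
  then show ?thesis
    using V by (simp add: farey_step_eq)
qed

lemma farey_triple_fold: "farey_triple V \<Longrightarrow> farey_triple (fold farey_step q V)"
  by (induction q arbitrary: V) (simp_all add: farey_triple_farey_step)

lemma farey_fold_mid_between:
  "farey_triple (r, t, s) \<Longrightarrow>
    farey_less r (mid (fold farey_step q (r, t, s))) \<and> farey_less (mid (fold farey_step q (r, t, s))) s"
proof (induction q arbitrary: r t s)
  case Nil
  then show ?case
    using farey_triple_less[OF Nil.prems] by simp
next
  case (Cons b q)
  have "farey_less r t" "farey_less t s"
    using farey_triple_less[OF Cons.prems] by auto
  show ?case
  proof (cases b)
    case False
    have "farey_triple (r, mediant r t, t)"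
      using farey_triple_farey_step[OF Cons.prems, of False] by (simp add: farey_step_eq)
    from Cons.IH[OF this] show ?thesis
      using False \<open>farey_less t s\<close> by (auto simp: farey_step_eq intro: farey_less_trans)
  next
    case True
    have "farey_triple (t, mediant t s, s)"
      using farey_triple_farey_step[OF Cons.prems, of True] by (simp add: farey_step_eq)
    from Cons.IH[OF this] show ?thesis
      using True \<open>farey_less r t\<close> by (auto simp: farey_step_eq intro: farey_less_trans)
  qed
qed

lemma frac_val_less_iff:
  "0 < snd q \<Longrightarrow> 0 < snd q' \<Longrightarrow> frac_val q < frac_val q' \<longleftrightarrow> farey_less q q'"
  unfolding frac_val_def farey_less_def
  by (simp add: divide_less_eq less_divide_eq flip: of_nat_mult)

lemma farey_fold_Cons_mid_side:
  assumes "farey_triple V"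
  shows "if b then frac_val (mid V) < frac_val (mid (fold farey_step (b # q) V))
    else frac_val (mid (fold farey_step (b # q) V)) < frac_val (mid V)"
proof -
  obtain r t s where V: "V = (r, t, s)"
    using prod_cases3 by blast
  let ?W = "farey_step b V"
  let ?m = "mid (fold farey_step q ?W)"
  have W: "farey_triple ?W"
    using assms by (rule farey_triple_farey_step)
  then have "0 < snd ?m"
    using farey_triple_mid_pos[OF farey_triple_fold] by blast
  moreover have "farey_less (fst ?W) ?m" "farey_less ?m (snd (snd ?W))"
    using farey_fold_mid_between[of "fst ?W" "mid ?W" "snd (snd ?W)" q] W by auto
  ultimately show ?thesis
    using farey_triple_mid_pos[OF assms] V by (cases b) (auto simp: farey_step_eq frac_val_less_iff)
qed

lemma farey_fold_mid_inj:
  assumes "farey_triple V"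
    and "frac_val (mid (fold farey_step q1 V)) = frac_val (mid (fold farey_step q2 V))"
  shows "q1 = q2"
  using assms
proof (induction q1 arbitrary: q2 V)
  case Nil
  show ?case
  proof (cases q2)
    case (Cons b q)
    then show ?thesis
      using Nil.prems farey_fold_Cons_mid_side[OF Nil.prems(1), of b q] by (auto split: if_splits)
  qed simp
next
  case (Cons b1 q1)
  note side = farey_fold_Cons_mid_side[OF Cons.prems(1)]
  show ?case
  proof (cases q2)
    case Nil
    then show ?thesis
      using Cons.prems side[of b1 q1] by (auto split: if_splits)
  next
    case q2: (Cons b2 q2')
    show ?thesis
    proof (cases "b1 = b2")
      case True
      then show ?thesis
        using Cons.IH[OF farey_triple_farey_step[OF Cons.prems(1)]] Cons.prems(2) q2 by simp
    next
      case False
      then show ?thesis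
        using Cons.prems(2) q2 side[of b1 q1] side[of b2 q2'] by (cases b1; cases b2) auto
    qed
  qed
qed

lemma farey_triple_farey_vertex: "farey_triple (farey_vertex p)"
  unfolding farey_vertex_def by (rule farey_triple_fold) (simp add: farey_less_def)

lemma farey_vertex_mid_inj:
  "frac_val (mid (farey_vertex p)) = frac_val (mid (farey_vertex p')) \<Longrightarrow> p = p'"
  unfolding farey_vertex_def
  by (rule farey_fold_mid_inj) (simp_all add: farey_less_def)

lemma Omega_farey_vertex_mid: "Omega (frac_val (mid (farey_vertex p))) = mid (word_vertex p)"
proof -
  have "0 < fst (mid (farey_vertex p))" "0 < snd (mid (farey_vertex p))"
    using farey_triple_mid_pos[OF farey_triple_farey_vertex] by auto
  then have "frac_val (mid (farey_vertex p)) \<noteq> 0"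
    by (simp add: frac_val_def)
  moreover have "(THE p'. frac_val (mid (farey_vertex p')) = frac_val (mid (farey_vertex p))) = p"
    by (rule the_equality) (simp_all add: farey_vertex_mid_inj)
  ultimately show ?thesis
    by (simp add: Omega_def)
qed

lemma Omega_frac_farey_vertex_mid: "Omega_frac (mid (farey_vertex p)) = mid (word_vertex p)"
  using farey_triple_mid_pos[OF farey_triple_farey_vertex, of p] Omega_farey_vertex_mid[of p]
  by (simp add: Omega_frac_def)

lemma Omega_frac_farey_vertex_ends:
  "Omega_frac (fst (farey_vertex p)) = fst (word_vertex p) \<and>
   Omega_frac (snd (snd (farey_vertex p))) = snd (snd (word_vertex p))"
proof (induction p rule: rev_induct)
  case Nil
  show ?case
    by (simp add: farey_vertex_def word_vertex_def Omega_frac_def Omega_def frac_val_def)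
next
  case (snoc b p)
  have "farey_vertex (p @ [b]) = farey_step b (farey_vertex p)"
    "word_vertex (p @ [b]) = word_step b (word_vertex p)"
    by (simp_all add: farey_vertex_def word_vertex_def)
  then show ?case
    using snoc.IH Omega_frac_farey_vertex_mid[of p]
    by (cases b; cases "farey_vertex p" rule: prod_cases3; cases "word_vertex p" rule: prod_cases3)
      (simp_all add: farey_step_eq)
qed

theorem lemma3p8:
  fixes p :: path and r t s :: "nat \<times> nat"
  assumes "farey_vertex p = (r, t, s)"
  shows "Omega (frac_val t) = finv (Omega_frac r) \<cdot> (gx \<cdot> gy \<cdot> gz) \<cdot> finv (Omega_frac s)"
proof -
  obtain A B C where W: "word_vertex p = (A, B, C)"
    using prod_cases3 by blast
  have "Omega (frac_val t) = B" "Omega_frac r = A" "Omega_frac s = C"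
    using Omega_farey_vertex_mid[of p] Omega_frac_farey_vertex_ends[of p] assms W by simp_all
  moreover have "A \<cdot> B \<cdot> C = gx \<cdot> gy \<cdot> gz"
    using triple_product_word_vertex[of p] W by simp
  moreover have "B \<in> F3"
    using word_vertex_in_F3[of p] W by simp
  ultimately show ?thesis
    using fmult_solve_middle[of B A C] by simp
qed

end
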